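(* Let $f\in\mathbb{R}[x]$, $G\in\mathcal{S}^m\mathbb{R}[x]$, and consider $\min f(x)$ s.t. $G(x)\succeq0$ with feasible set $S(G)=\{x\in\mathbb{R}^n:G(x)\succeq0\}$ and optimal value $f_{\min}$. Suppose $u$ is a local minimizer at which the nondegeneracy condition, strict complementarity condition and second order sufficient condition hold. Then there exist a neighborhood $U$ of $u$ and an element $a_u\in\mathrm{QM}[G]$ such that $$\{x\in\mathbb{R}^n:a_u(x)\ge0\}\cap V_{\mathbb{R}}(f-f_{\min})\cap U\subset S(G).$$
   Context: $V_{\mathbb{R}}(f-f_{\min})=\{x\in\mathbb{R}^n:f(x)=f_{\min}\}$. $\mathrm{QM}[G]=\{\sigma+\sum_{t=1}^r v_t^TGv_t:\sigma\text{ SOS in }\mathbb{R}[x],\ v_t\in\mathbb{R}[x]^m,\ r\in\mathbb{N}\}$. Optimality conditions at feasible $u$: $\nabla G(u)[d]=\sum_id_i\partial_{x_i}G(u)$, $\nabla G(u)^*[X]=(\langle\partial_{x_i}G(u),X\rangle)_i$, $\langle W,Y\rangle=\mathrm{tr}(WY^T)$; $E$ has columns forming a basis of $\ker G(u)$. NDC: $\mathrm{Im}\,\nabla G(u)+\{N\in\mathcal{S}^m:E^TNE=0\}=\mathcal{S}^m$. Under NDC at a local minimizer there is a unique $\Lambda\in\mathcal{S}^m$ with $\nabla f(u)-\nabla G(u)^*[\Lambda]=0$, $\Lambda\succeq0$, $\langle\Lambda,G(u)\rangle=0$. SCC: $\mathrm{rank}\,G(u)+\mathrm{rank}\,\Lambda=m$.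 SOSC: $h^T(\nabla^2L(u,\Lambda)+H(u,\Lambda))h>0$ for all $0\ne h$ with $\sum_ih_iE^T\partial_{x_i}G(u)E=0$, where $L(x,\Lambda)=f-\langle\Lambda,G\rangle$ and $H(x,Q)_{ij}=2\langle Q,\partial_{x_i}G(x)G(x)^\dagger\partial_{x_j}G(x)\rangle$ ($\dagger$ = Moore–Penrose inverse). *)

theory Defs
  imports "HOL-Analysis.Analysis"
begin

inductive_set polyfun :: "(real^'n \<Rightarrow> real) set" where
  pconst: "(\<lambda>x. c) \<in> polyfun"
| pvar: "(\<lambda>x. x $ i) \<in> polyfun"
| padd: "p \<in> polyfun \<Longrightarrow> q \<in> polyfun \<Longrightarrow> (\<lambda>x. p x + q x) \<in> polyfun"
| pmult: "p \<in> polyfun \<Longrightarrow> q \<in> polyfun \<Longrightarrow> (\<lambda>x. p x * q x) \<in> polyfun"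

definition sym_mat :: "real^'m^'m \<Rightarrow> bool" where
  "sym_mat A \<longleftrightarrow> transpose A = A"

definition polymat_sym :: "(real^'n \<Rightarrow> real^'m^'m) \<Rightarrow> bool" where
  "polymat_sym G \<longleftrightarrow> (\<forall>k l. (\<lambda>x. G x $ k $ l) \<in> polyfun) \<and> (\<forall>x. sym_mat (G x))"

definition psd :: "real^'m^'m \<Rightarrow> bool" where
  "psd A \<longleftrightarrow> sym_mat A \<and> (\<forall>v. v \<bullet> (A *v v) \<ge> 0)"

definition feas :: "(real^'n \<Rightarrow> real^'m^'m) \<Rightarrow> (real^'n) set" where
  "feas G = {x. psd (G x)}"

definition SOS :: "(real^'n \<Rightarrow> real) set" where
  "SOS = {s. \<exists>r q. (\<forall>t<r. q t \<in> polyfun) \<and> s = (\<lambda>x. \<Sum>t<(r::nat). (q t x)\<^sup>2)}"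

definition QM :: "(real^'n \<Rightarrow> real^'m^'m) \<Rightarrow> (real^'n \<Rightarrow> real) set" where
  "QM G = {a. \<exists>\<sigma> r v. \<sigma> \<in> SOS \<and> (\<forall>t<(r::nat). \<forall>k. (\<lambda>x. v t x $ k) \<in> polyfun) \<and>
             a = (\<lambda>x. \<sigma> x + (\<Sum>t<r. v t x \<bullet> (G x *v v t x)))}"

definition partial :: "'n \<Rightarrow> (real^'n \<Rightarrow> real) \<Rightarrow> real^'n \<Rightarrow> real" where
  "partial i p x = deriv (\<lambda>t. p (x + t *\<^sub>R axis i 1)) 0"

definition mpartial :: "'n \<Rightarrow> (real^'n \<Rightarrow> real^'m^'m) \<Rightarrow> real^'n \<Rightarrow> real^'m^'m" where
  "mpartial i G x = (\<chi> k l. partial i (\<lambda>y. G y $ k $ l) x)"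

definition grad :: "(real^'n \<Rightarrow> real) \<Rightarrow> real^'n \<Rightarrow> real^'n" where
  "grad p x = (\<chi> i. partial i p x)"

definition hess :: "(real^'n \<Rightarrow> real) \<Rightarrow> real^'n \<Rightarrow> real^'n^'n" where
  "hess p x = (\<chi> i j. partial j (partial i p) x)"

definition frob :: "real^'m^'m \<Rightarrow> real^'m^'m \<Rightarrow> real" where
  "frob W Y = trace (W ** transpose Y)"

definition mp_inv :: "real^'m^'m \<Rightarrow> real^'m^'m" where
  "mp_inv A = (THE X. A ** X ** A = A \<and> X ** A ** X = X \<and>
                      transpose (A ** X) = A ** X \<and> transpose (X ** A) = X ** A)"

definition local_minimizer ::
  "(real^'n \<Rightarrow> real) \<Rightarrow> (real^'n \<Rightarrow> real^'m^'m) \<Rightarrow> real^'n \<Rightarrow> bool" where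
  "local_minimizer f G u \<longleftrightarrow> u \<in> feas G \<and>
     (\<exists>e>0. \<forall>x\<in>feas G. dist x u < e \<longrightarrow> f u \<le> f x)"

definition fmin :: "(real^'n \<Rightarrow> real) \<Rightarrow> (real^'n \<Rightarrow> real^'m^'m) \<Rightarrow> real" where
  "fmin f G = Inf (f ` feas G)"

definition kernel_cols :: "real^'m^'m \<Rightarrow> real^'m^'m \<Rightarrow> bool" where
  "kernel_cols A E \<longleftrightarrow> range (\<lambda>y. E *v y) = {w. A *v w = 0}"

definition NDC :: "(real^'n \<Rightarrow> real^'m^'m) \<Rightarrow> real^'n \<Rightarrow> real^'m^'m \<Rightarrow> bool" where
  "NDC G u E \<longleftrightarrow> (\<forall>M. sym_mat M \<longrightarrow> (\<exists>d N. sym_mat N \<and> transpose E ** N ** E = 0 \<and>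
       M = (\<Sum>i\<in>UNIV. d $ i *\<^sub>R mpartial i G u) + N))"

definition KKT :: "(real^'n \<Rightarrow> real) \<Rightarrow> (real^'n \<Rightarrow> real^'m^'m) \<Rightarrow> real^'n \<Rightarrow> real^'m^'m \<Rightarrow> bool" where
  "KKT f G u \<Lambda> \<longleftrightarrow> sym_mat \<Lambda> \<and> grad f u - (\<chi> i. frob (mpartial i G u) \<Lambda>) = 0 \<and>
      psd \<Lambda> \<and> frob \<Lambda> (G u) = 0"

definition SCC :: "(real^'n \<Rightarrow> real^'m^'m) \<Rightarrow> real^'n \<Rightarrow> real^'m^'m \<Rightarrow> bool" where
  "SCC G u \<Lambda> \<longleftrightarrow> rank (G u) + rank \<Lambda> = CARD('m)"

definition Lag :: "(real^'n \<Rightarrow> real) \<Rightarrow> (real^'n \<Rightarrow> real^'m^'m) \<Rightarrow> real^'m^'m \<Rightarrow> real^'n \<Rightarrow> real" where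
  "Lag f G \<Lambda> x = f x - frob \<Lambda> (G x)"

definition Hterm :: "(real^'n \<Rightarrow> real^'m^'m) \<Rightarrow> real^'n \<Rightarrow> real^'m^'m \<Rightarrow> real^'n^'n" where
  "Hterm G x Q = (\<chi> i j. 2 * frob Q (mpartial i G x ** mp_inv (G x) ** mpartial j G x))"

definition SOSC :: "(real^'n \<Rightarrow> real) \<Rightarrow> (real^'n \<Rightarrow> real^'m^'m) \<Rightarrow> real^'n \<Rightarrow> real^'m^'m \<Rightarrow> real^'m^'m \<Rightarrow> bool" where
  "SOSC f G u \<Lambda> E \<longleftrightarrow> (\<forall>h. h \<noteq> 0 \<longrightarrow>
      (\<Sum>i\<in>UNIV. h $ i *\<^sub>R (transpose E ** mpartial i G u ** E)) = 0 \<longrightarrow>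
      h \<bullet> ((hess (Lag f G \<Lambda>) u + Hterm G u \<Lambda>) *v h) > 0)"

end

theory Submission
  imports Defs
begin

(*
  Factor the multiplier as Lambda = sum_t R_t R_t^T; complementarity gives G(u) R_t = 0.
  With P the orthogonal projector onto ker G(u) and a parameter rho, the certificate is
    a(x) = sum_t w_t(x)^T G(x) w_t(x),   w_t(x) = R_t - (G(u)^+ + rho P) DG(u)[x - u] R_t,
  which lies in QM[G] because every w_t is affine in x.  Expanding G to first order and the
  Lagrangian L to second order at u shows that on the level set {f = f(u)}
    a(u + d) = - d^T (hess L(u) + H) d / 2 - 2 rho sum_t |P DG(u)[d] R_t|^2 + o(|d|^2),
  where the Moore-Penrose part of w_t produces exactly the curvature term H of the SOSC.
  Strict complementarity gives ker G(u) = range Lambda, so the penalty vanishes only on the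
  critical cone, where the SOSC form is positive; Finsler's lemma then provides rho with
  a(u + d) < 0 for small d \<noteq> 0 on the level set.
*)

section \<open>Polynomial functions and their derivatives\<close>

lemma polyfun_sum:
  "(\<And>i. i \<in> I \<Longrightarrow> p i \<in> polyfun) \<Longrightarrow> (\<lambda>x. \<Sum>i\<in>I. p i x) \<in> polyfun"
proof (induction I rule: infinite_finite_induct)
  case (insert j I)
  then show ?case by (simp add: polyfun.padd)
qed (simp_all add: polyfun.pconst)

lemma polyfun_diffI: "p \<in> polyfun \<Longrightarrow> q \<in> polyfun \<Longrightarrow> (\<lambda>x. p x - q x) \<in> polyfun"
  using polyfun.padd[OF _ polyfun.pmult[OF polyfun.pconst[of "-1"]], of p q] by simp

lemma linear_polyfun:
  fixes h :: "real^'n \<Rightarrow> real"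
  assumes "linear h"
  shows "h \<in> polyfun"
proof -
  have "h x = (\<Sum>i\<in>UNIV. x $ i * h (axis i 1))" for x
  proof -
    have "h x = h (\<Sum>i\<in>UNIV. x $ i *\<^sub>R axis i 1)"
      using basis_expansion[of x] by (simp add: scalar_mult_eq_scaleR)
    then show ?thesis
      by (simp add: linear_sum[OF assms] linear.scaleR[OF assms] o_def)
  qed
  then have "h = (\<lambda>x. \<Sum>i\<in>UNIV. x $ i * h (axis i 1))" ..
  also have "\<dots> \<in> polyfun"
    by (rule polyfun_sum, rule polyfun.pmult, rule polyfun.pvar, rule polyfun.pconst)
  finally show ?thesis .
qed

lemma has_derivative_vec_nth_iff:
  fixes f :: "'a::real_normed_vector \<Rightarrow> 'b::euclidean_space^'n"
  shows "(f has_derivative f') (at x) \<longleftrightarrow> (\<forall>i. ((\<lambda>x. f x $ i) has_derivative (\<lambda>v. f' v $ i)) (at x))"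
  unfolding has_derivative_componentwise_within[of f] has_derivative_componentwise_within[of "\<lambda>x. f x $ _"]
  by (auto simp: Basis_vec_def inner_axis)

lemma partial_eq_derivative:
  assumes "(p has_derivative D) (at x)"
  shows "partial i p x = D (axis i 1)"
proof -
  have "((\<lambda>t. x + t *\<^sub>R axis i 1) has_derivative (\<lambda>s. s *\<^sub>R axis i 1)) (at 0)"
    by (auto intro!: derivative_eq_intros)
  moreover have "(p has_derivative D) (at (x + 0 *\<^sub>R axis i 1))"
    using assms by simp
  ultimately have "((\<lambda>t. p (x + t *\<^sub>R axis i 1)) has_derivative (\<lambda>s. D (s *\<^sub>R axis i 1))) (at 0)"
    by (rule has_derivative_compose)
  then have "((\<lambda>t. p (x + t *\<^sub>R axis i 1)) has_derivative (\<lambda>s. s * D (axis i 1))) (at 0)"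
    by (simp add: linear.scaleR[OF has_derivative_linear[OF assms]])
  then show ?thesis
    unfolding partial_def by (intro DERIV_imp_deriv) (simp add: has_field_derivative_def mult_commute_abs)
qed

lemma polyfun_has_polyfun_derivative:
  assumes "p \<in> polyfun"
  obtains D where "\<And>i. (\<lambda>x. D x $ i) \<in> polyfun" and "\<And>x. (p has_derivative (\<lambda>v. v \<bullet> D x)) (at x)"
proof -
  have "\<exists>D. (\<forall>i. (\<lambda>x. D x $ i) \<in> polyfun) \<and> (\<forall>x. (p has_derivative (\<lambda>v. v \<bullet> D x)) (at x))"
    using assms
  proof (induction rule: polyfun.induct)
    case (pconst c)
    show ?case
      by (rule exI[of _ "\<lambda>x. 0"]) (auto intro: polyfun.pconst)
  next
    case (pvar j)
    have "((\<lambda>x. x $ j) has_derivative (\<lambda>v. v \<bullet> axis j 1)) (at x)" for x :: "real^'a"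
      by (simp add: inner_axis bounded_linear_imp_has_derivative bounded_linear_vec_nth)
    then show ?case
      by (intro exI[of _ "\<lambda>x. axis j 1"]) (auto simp: axis_def intro: polyfun.pconst)
  next
    case (padd p q)
    then obtain Dp Dq
      where Dp: "\<And>i. (\<lambda>x. Dp x $ i) \<in> polyfun" "\<And>x. (p has_derivative (\<lambda>v. v \<bullet> Dp x)) (at x)"
        and Dq: "\<And>i. (\<lambda>x. Dq x $ i) \<in> polyfun" "\<And>x. (q has_derivative (\<lambda>v. v \<bullet> Dq x)) (at x)"
      by blast
    have "(\<lambda>x. (Dp x + Dq x) $ i) \<in> polyfun" for i
      using polyfun.padd[OF Dp(1) Dq(1)] by simp
    moreover have "((\<lambda>x. p x + q x) has_derivative (\<lambda>v. v \<bullet> (Dp x + Dq x))) (at x)" for x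
      using has_derivative_add[OF Dp(2) Dq(2)] by (simp add: inner_add_right)
    ultimately show ?case
      by (intro exI[of _ "\<lambda>x. Dp x + Dq x"]) blast
  next
    case (pmult p q)
    then obtain Dp Dq
      where Dp: "\<And>i. (\<lambda>x. Dp x $ i) \<in> polyfun" "\<And>x. (p has_derivative (\<lambda>v. v \<bullet> Dp x)) (at x)"
        and Dq: "\<And>i. (\<lambda>x. Dq x $ i) \<in> polyfun" "\<And>x. (q has_derivative (\<lambda>v. v \<bullet> Dq x)) (at x)"
      by blast
    have "(\<lambda>x. (q x *\<^sub>R Dp x + p x *\<^sub>R Dq x) $ i) \<in> polyfun" for i
      using polyfun.padd[OF polyfun.pmult[OF pmult.hyps(2) Dp(1)] polyfun.pmult[OF pmult.hyps(1) Dq(1)]]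
      by simp
    moreover have "((\<lambda>x. p x * q x) has_derivative (\<lambda>v. v \<bullet> (q x *\<^sub>R Dp x + p x *\<^sub>R Dq x))) (at x)" for x
      using has_derivative_mult[OF Dp(2) Dq(2)] by (simp add: algebra_simps)
    ultimately show ?case
      by (intro exI[of _ "\<lambda>x. q x *\<^sub>R Dp x + p x *\<^sub>R Dq x"]) blast
  qed
  then show thesis
    using that by blast
qed

lemma polyfun_grad:
  assumes "p \<in> polyfun"
  shows polyfun_has_derivative: "(p has_derivative (\<lambda>v. v \<bullet> grad p x)) (at x)"
    and polyfun_partial: "partial i p \<in> polyfun"
proof -
  obtain D where D: "\<And>i. (\<lambda>x. D x $ i) \<in> polyfun" "\<And>x. (p has_derivative (\<lambda>v. v \<bullet> D x)) (at x)"
    using polyfun_has_polyfun_derivative[OF assms] by blast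
  have partial_D: "partial i p = (\<lambda>x. D x $ i)" for i
    by (simp add: fun_eq_iff partial_eq_derivative[OF D(2)] inner_axis inner_commute)
  then have "grad p = D"
    by (simp add: fun_eq_iff vec_eq_iff grad_def)
  with D partial_D show "(p has_derivative (\<lambda>v. v \<bullet> grad p x)) (at x)" "partial i p \<in> polyfun"
    by simp_all
qed

lemma polyfun_isCont: "p \<in> polyfun \<Longrightarrow> isCont p x"
  by (rule has_derivative_continuous[OF polyfun_has_derivative])

lemma polyfun_hess_has_derivative:
  assumes "p \<in> polyfun"
  shows "(grad p has_derivative (\<lambda>v. hess p x *v v)) (at x)"
proof -
  have "((\<lambda>y. partial i p y) has_derivative (\<lambda>v. v \<bullet> grad (partial i p) x)) (at x)" for i
    using polyfun_has_derivative[OF polyfun_partial[OF assms]] .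
  then show ?thesis
    by (simp add: has_derivative_vec_nth_iff grad_def hess_def matrix_vector_mult_def inner_vec_def mult.commute)
qed

lemma has_real_derivative_along_line:
  assumes "(p has_derivative D) (at (x + t *\<^sub>R d))"
  shows "((\<lambda>s. p (x + s *\<^sub>R d)) has_real_derivative D d) (at t)"
proof -
  have "((\<lambda>s. x + s *\<^sub>R d) has_derivative (\<lambda>s. s *\<^sub>R d)) (at t)"
    by (auto intro!: derivative_eq_intros)
  from has_derivative_compose[OF this assms]
  show ?thesis
    by (simp add: has_field_derivative_def linear.scaleR[OF has_derivative_linear[OF assms]] mult_commute_abs)
qed

lemma norm_matrix_vector_mult_le:
  fixes A :: "real^'n^'m"
  shows "norm (A *v x) \<le> norm A * norm x"
proof -
  have "\<bar>(A *v x) $ i\<bar> \<le> norm (A $ i) * norm x" for i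
    using Cauchy_Schwarz_ineq2[of "A $ i" x]
    by (simp add: matrix_vector_mult_def inner_vec_def)
  then have "norm (A *v x) \<le> L2_set (\<lambda>i. norm (A $ i) * norm x) UNIV"
    unfolding norm_vec_def by (intro L2_set_mono) auto
  then show ?thesis
    by (simp add: norm_vec_def L2_set_left_distrib)
qed

lemma abs_inner_matrix_vector_le:
  fixes A :: "real^'n^'m"
  shows "\<bar>x \<bullet> (A *v y)\<bar> \<le> norm A * norm x * norm y"
  using Cauchy_Schwarz_ineq2[of x "A *v y"] norm_matrix_vector_mult_le[of A y]
    mult_left_mono[of "norm (A *v y)" "norm A * norm y" "norm x"]
  by (simp add: mult_ac)

lemma isCont_polymat:
  fixes M :: "real^'n \<Rightarrow> real^'m^'k"
  assumes "\<And>k l. (\<lambda>x. M x $ k $ l) \<in> polyfun"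
  shows "isCont M x"
proof -
  have "isCont (\<lambda>x. \<chi> k l. M x $ k $ l) x"
    unfolding isCont_def by (intro tendsto_vec_lambda isCont_tendsto_compose[OF polyfun_isCont] assms tendsto_ident_at)
  then show ?thesis
    by simp
qed

lemma polyfun_line_taylor2:
  assumes p: "p \<in> polyfun"
  obtains t where "0 < t" "t < 1" "p (x + d) = p x + d \<bullet> grad p x + d \<bullet> (hess p (x + t *\<^sub>R d) *v d) / 2"
proof -
  define \<phi> where "\<phi> m = (if m = 0 then (\<lambda>s. p (x + s *\<^sub>R d))
    else if m = 1 then (\<lambda>s. d \<bullet> grad p (x + s *\<^sub>R d)) else (\<lambda>s. d \<bullet> (hess p (x + s *\<^sub>R d) *v d)))"
    for m :: nat
  have "(\<phi> m has_real_derivative \<phi> (Suc m) s) (at s)" if "m < 2" for m s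
  proof -
    have "((\<lambda>y. d \<bullet> grad p y) has_derivative (\<lambda>v. d \<bullet> (hess p y *v v))) (at y)" for y
      by (rule bounded_linear.has_derivative[OF bounded_linear_inner_right polyfun_hess_has_derivative[OF p]])
    from has_real_derivative_along_line[OF this] has_real_derivative_along_line[OF polyfun_has_derivative[OF p]]
    show ?thesis
      using \<open>m < 2\<close> by (auto simp: \<phi>_def less_2_cases_iff)
  qed
  then show thesis
    using Maclaurin[of 1 2 \<phi> "\<lambda>s. p (x + s *\<^sub>R d)"] that by (auto simp: \<phi>_def numeral_2_eq_2)
qed

lemma polyfun_taylor2:
  assumes p: "p \<in> polyfun" and "e > 0"
  shows "\<forall>\<^sub>F d in at 0. \<bar>p (x + d) - p x - d \<bullet> grad p x - d \<bullet> (hess p x *v d) / 2\<bar> \<le> e * (norm d)\<^sup>2"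
proof -
  have "isCont (hess p) x"
    by (intro isCont_polymat) (simp add: hess_def polyfun_partial p)
  then obtain \<delta> where "\<delta> > 0" and \<delta>: "\<And>y. dist y x < \<delta> \<Longrightarrow> norm (hess p y - hess p x) < 2 * e"
    using \<open>e > 0\<close> unfolding continuous_at_eps_delta dist_norm by (metis mult_pos_pos zero_less_numeral)
  have "\<bar>p (x + d) - p x - d \<bullet> grad p x - d \<bullet> (hess p x *v d) / 2\<bar> \<le> e * (norm d)\<^sup>2"
    if "norm d < \<delta>" for d
  proof -
    obtain t where t: "0 < t" "t < 1"
      and taylor: "p (x + d) = p x + d \<bullet> grad p x + d \<bullet> (hess p (x + t *\<^sub>R d) *v d) / 2"
      using polyfun_line_taylor2[OF p] .
    have "t * norm d \<le> norm d"
      using t by (simp add: mult_left_le_one_le)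
    then have "dist (x + t *\<^sub>R d) x < \<delta>"
      using t \<open>norm d < \<delta>\<close> by (simp add: dist_norm)
    then have hess_close: "norm (hess p (x + t *\<^sub>R d) - hess p x) \<le> 2 * e"
      using \<delta> less_imp_le by blast
    have "\<bar>p (x + d) - p x - d \<bullet> grad p x - d \<bullet> (hess p x *v d) / 2\<bar>
        = \<bar>d \<bullet> ((hess p (x + t *\<^sub>R d) - hess p x) *v d)\<bar> / 2"
      by (simp add: taylor matrix_vector_mult_diff_rdistrib inner_diff_right flip: diff_divide_distrib)
    also have "\<dots> \<le> norm (hess p (x + t *\<^sub>R d) - hess p x) * norm d * norm d / 2"
      by (intro divide_right_mono abs_inner_matrix_vector_le) simp
    also have "\<dots> \<le> 2 * e * norm d * norm d / 2"
      by (intro divide_right_mono mult_right_mono hess_close) simp_all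
    finally show ?thesis
      by (simp add: power2_eq_square)
  qed
  then show ?thesis
    using \<open>\<delta> > 0\<close> by (auto simp: eventually_at dist_norm)
qed

section \<open>Symmetric and positive semidefinite matrices\<close>

definition outer_prod :: "real^'m \<Rightarrow> real^'m^'m" where
  "outer_prod a = (\<chi> k l. a $ k * a $ l)"

lemma outer_prod_mult_vec: "outer_prod a *v v = (a \<bullet> v) *\<^sub>R a"
  by (simp add: outer_prod_def matrix_vector_mult_def vec_eq_iff inner_vec_def sum_distrib_left
      sum_distrib_right algebra_simps)

lemma matrix_vector_mult_sum: "(\<Sum>t\<in>T. M t) *v v = (\<Sum>t\<in>T. M t *v v)"
  by (induction T rule: infinite_finite_induct) (simp_all add: matrix_vector_mult_add_rdistrib)

lemma sum_outer_prod_mult_vec: "(\<Sum>t\<in>T. outer_prod (R t)) *v v = (\<Sum>t\<in>T. (R t \<bullet> v) *\<^sub>R R t)"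
  by (simp add: matrix_vector_mult_sum outer_prod_mult_vec)
lemma outer_prod_inner: "outer_prod a \<bullet> M = a \<bullet> (M *v a)"
  by (simp add: outer_prod_def inner_vec_def matrix_vector_mult_def sum_distrib_left mult_ac)

lemma inner_sum_outer_prod: "(\<Sum>t\<in>T. outer_prod (R t)) \<bullet> M = (\<Sum>t\<in>T. R t \<bullet> (M *v R t))"
  by (simp add: inner_sum_left outer_prod_inner)

lemma sym_mat_entry: "sym_mat A \<Longrightarrow> A $ l $ k = A $ k $ l"
  unfolding sym_mat_def by (metis transpose_def vec_lambda_beta)

lemma sym_mat_sum_outer_prod: "sym_mat (\<Sum>t\<in>T. outer_prod (R t))"
  by (simp add: sym_mat_def transpose_def vec_eq_iff outer_prod_def mult.commute)
lemma frob_eq_inner: "frob A B = A \<bullet> B"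
  by (simp add: frob_def trace_def matrix_matrix_mult_def transpose_def inner_vec_def)

lemma sym_mat_inner_commute: "sym_mat A \<Longrightarrow> x \<bullet> (A *v y) = (A *v x) \<bullet> y"
  using dot_lmul_matrix[of x A y] by (simp add: sym_mat_def flip: transpose_matrix_vector)

lemma inner_axis_matrix_axis: "axis i 1 \<bullet> (A *v axis j 1) = A $ i $ j"
  by (simp add: matrix_vector_mult_basis column_def inner_axis')

lemma psd_row_zero:
  assumes "psd A" "A $ i $ i = 0"
  shows "A $ i $ l = 0"
proof -
  have "0 \<le> (axis l 1 + s *\<^sub>R axis i 1) \<bullet> (A *v (axis l 1 + s *\<^sub>R axis i 1))" for s
    using assms(1) by (simp add: psd_def)
  also have "(axis l 1 + s *\<^sub>R axis i 1) \<bullet> (A *v (axis l 1 + s *\<^sub>R axis i 1)) = A $ l $ l + 2 * s * A $ i $ l" for s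
    using assms sym_mat_entry[of A i l] by (simp add: psd_def inner_axis_matrix_axis algebra_simps)
  finally have affine_nonneg: "0 \<le> A $ l $ l + 2 * s * A $ i $ l" for s .
  show ?thesis
  proof (rule ccontr)
    assume "A $ i $ l \<noteq> 0"
    then have "2 * (- (\<bar>A $ l $ l\<bar> + 1) / (2 * A $ i $ l)) * A $ i $ l = - (\<bar>A $ l $ l\<bar> + 1)"
      by simp
    then show False
      using affine_nonneg[of "- (\<bar>A $ l $ l\<bar> + 1) / (2 * A $ i $ l)"] by linarith
  qed
qed

lemma psd_schur_complement:
  assumes "psd A" and pos: "A $ i $ i > 0"
  shows "psd (A - (1 / A $ i $ i) *\<^sub>R outer_prod (column i A))"
proof -
  define c where "c = A $ i $ i"
  define a where "a = column i A"
  have sym: "sym_mat A" and quad: "\<And>w. 0 \<le> w \<bullet> (A *v w)"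
    using assms(1) by (auto simp: psd_def)
  have Ae: "A *v axis i 1 = a"
    by (simp add: a_def matrix_vector_mult_basis)
  have "v \<bullet> ((A - (1 / c) *\<^sub>R outer_prod a) *v v) \<ge> 0" for v
  proof -
    define w where "w = v - ((a \<bullet> v) / c) *\<^sub>R axis i 1"
    have "axis i 1 \<bullet> (A *v v) = a \<bullet> v" "axis i 1 \<bullet> a = c"
      using sym_mat_inner_commute[OF sym, of "axis i 1" v] Ae
      by (simp_all add: a_def c_def column_def inner_axis')
    then have "w \<bullet> (A *v w) = v \<bullet> ((A - (1 / c) *\<^sub>R outer_prod a) *v v)"
      using pos Ae unfolding c_def[symmetric]
      by (simp add: w_def inner_diff_left inner_diff_right matrix_vector_mult_diff_distrib
          matrix_vector_mult_diff_rdistrib matrix_vector_mult_scaleR outer_prod_mult_vec inner_commute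
          field_simps flip: scaleR_matrix_vector_assoc)
    then show ?thesis
      using quad[of w] by simp
  qed
  moreover have "sym_mat (A - (1 / c) *\<^sub>R outer_prod a)"
    using sym by (auto simp: sym_mat_def transpose_def vec_eq_iff outer_prod_def mult.commute)
  ultimately show ?thesis
    by (simp add: psd_def a_def c_def)
qed

lemma schur_complement_support:
  assumes "sym_mat A" "i \<notin> I" "\<And>k l. k \<notin> insert i I \<or> l \<notin> insert i I \<Longrightarrow> A $ k $ l = 0"
    and "A $ i $ i \<noteq> 0" "k \<notin> I \<or> l \<notin> I"
  shows "(A - (1 / A $ i $ i) *\<^sub>R outer_prod (column i A)) $ k $ l = 0"
  using assms(2-5) assms(3)[of k i] assms(3)[of l i] sym_mat_entry[OF assms(1), of i k]
    sym_mat_entry[OF assms(1), of i l]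
  by (cases "k = i"; cases "l = i") (auto simp: outer_prod_def column_def)

lemma psd_supported_sum_outer_prod:
  assumes "finite I"
  shows "psd A \<Longrightarrow> (\<And>k l. k \<notin> I \<or> l \<notin> I \<Longrightarrow> A $ k $ l = 0) \<Longrightarrow>
    \<exists>(N::nat) R. A = (\<Sum>t<N. outer_prod (R t))"
  using assms
proof (induction I arbitrary: A rule: finite_induct)
  case empty
  then have "A = 0"
    by (simp add: vec_eq_iff)
  show ?case
    using \<open>A = 0\<close> by (metis lessThan_0 sum.empty)
next
  case (insert i I)
  have sym: "A $ l $ k = A $ k $ l" for k l
    using insert.prems(1) sym_mat_entry by (auto simp: psd_def)
  show ?case
  proof (cases "A $ i $ i = 0")
    case True
    then have "A $ i $ l = 0" "A $ l $ i = 0" for l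
      using psd_row_zero[OF insert.prems(1)] sym by auto
    then show ?thesis
      using insert by (metis insertE)
  next
    case False
    define c where "c = A $ i $ i"
    define A' where "A' = A - (1 / c) *\<^sub>R outer_prod (column i A)"
    have "0 \<le> c"
      using insert.prems(1) inner_axis_matrix_axis[of i A i] unfolding psd_def c_def by metis
    with False have "c > 0"
      by (simp add: c_def)
    have "psd A'"
      using psd_schur_complement[OF insert.prems(1)] \<open>c > 0\<close> by (simp add: A'_def c_def)
    moreover have "A' $ k $ l = 0" if "k \<notin> I \<or> l \<notin> I" for k l
      using schur_complement_support[OF _ insert.hyps(2) insert.prems(2) False that] insert.prems(1)
      by (simp add: A'_def c_def psd_def)
    ultimately obtain N :: nat and R where A': "A' = (\<Sum>t<N. outer_prod (R t))"
      using insert.IH by blast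
    have "outer_prod ((1 / sqrt c) *\<^sub>R column i A) = (1 / c) *\<^sub>R outer_prod (column i A)"
      using \<open>c > 0\<close> by (simp add: outer_prod_def vec_eq_iff field_simps)
    moreover have "(\<Sum>t<N. outer_prod ((R(N := b)) t)) = (\<Sum>t<N. outer_prod (R t))" for b
      by (rule sum.cong) auto
    moreover have "A = A' + (1 / c) *\<^sub>R outer_prod (column i A)"
      by (simp add: A'_def)
    ultimately have "A = (\<Sum>t<Suc N. outer_prod ((R(N := (1 / sqrt c) *\<^sub>R column i A)) t))"
      by (simp add: A')
    then show ?thesis
      by blast
  qed
qed

lemma psd_sum_outer_prod:
  assumes "psd A"
  obtains N :: nat and R where "A = (\<Sum>t<N. outer_prod (R t))"
  using psd_supported_sum_outer_prod[of UNIV A] assms that by auto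

lemma psd_quadratic_eq_zero:
  assumes "psd A" "v \<bullet> (A *v v) = 0"
  shows "A *v v = 0"
proof -
  obtain N :: nat and R where A: "A = (\<Sum>t<N. outer_prod (R t))"
    using psd_sum_outer_prod[OF assms(1)] .
  have "(\<Sum>t<N. (R t \<bullet> v)\<^sup>2) = 0"
    using assms(2) by (simp add: A sum_outer_prod_mult_vec inner_sum_right power2_eq_square inner_commute)
  then have "R t \<bullet> v = 0" if "t < N" for t
    using that by (simp add: sum_nonneg_eq_0_iff)
  then show ?thesis
    by (simp add: A sum_outer_prod_mult_vec)
qed

lemma psd_inner_sum_outer_prod_eq_zero:
  fixes N :: nat
  assumes "psd A" "(\<Sum>t<N. outer_prod (R t)) \<bullet> A = 0" "t < N"
  shows "A *v R t = 0"
proof -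
  have "R s \<bullet> (A *v R s) \<ge> 0" for s
    using assms(1) by (simp add: psd_def)
  then have "\<forall>s\<in>{..<N}. R s \<bullet> (A *v R s) = 0"
    using assms(2) sum_nonneg_eq_0_iff[of "{..<N}" "\<lambda>s. R s \<bullet> (A *v R s)"]
    by (simp add: inner_sum_outer_prod)
  then have "R t \<bullet> (A *v R t) = 0"
    using assms(3) by simp
  then show ?thesis
    by (rule psd_quadratic_eq_zero[OF assms(1)])
qed

lemma sym_mat_kernel_eq_range:
  fixes A L :: "real^'m^'m"
  assumes sym: "sym_mat A" and "A ** L = 0" and rank: "rank A + rank L = CARD('m)"
  shows "{z. A *v z = 0} = range ((*v) L)"
proof -
  define K where "K = {z. A *v z = 0}"
  have "A *v z = 0 \<longleftrightarrow> (\<forall>x. orthogonal (A *v x) z)" for z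
    using sym_mat_inner_commute[OF sym] inner_eq_zero_iff
    by (metis inner_zero_right orthogonal_def)
  then have K_orth: "K = {z \<in> UNIV. \<forall>x \<in> range ((*v) A). orthogonal x z}"
    by (auto simp: K_def)
  have "dim K + dim (range ((*v) A)) = dim (UNIV :: (real^'m) set)"
    unfolding K_orth
    by (rule dim_subspace_orthogonal_to_vectors) (simp_all add: linear_subspace_image)
  then have "dim K = rank L"
    using rank by (simp add: rank_dim_range)
  moreover have "range ((*v) L) \<subseteq> K"
    using \<open>A ** L = 0\<close> by (auto simp: K_def matrix_vector_mul_assoc)
  moreover have "subspace K"
    unfolding K_def by (rule linear_subspace_kernel) simp
  ultimately show ?thesis
    using subspace_dim_equal[of "range ((*v) L)" K]
    by (simp add: K_def linear_subspace_image rank_dim_range)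
qed

section \<open>The Moore-Penrose inverse of a symmetric matrix\<close>

lemma penrose_unique:
  fixes A X Y :: "real^'m^'m"
  assumes "A ** X ** A = A" "X ** A ** X = X" "transpose (A ** X) = A ** X" "transpose (X ** A) = X ** A"
      and "A ** Y ** A = A" "Y ** A ** Y = Y" "transpose (A ** Y) = A ** Y" "transpose (Y ** A) = Y ** A"
  shows "X = Y"
proof -
  have AX: "A ** X = A ** Y"
  proof -
    have "A ** X = transpose X ** transpose A" using assms(3) by (metis matrix_transpose_mul)
    also have "\<dots> = transpose X ** transpose (A ** Y ** A)" using assms(5) by simp
    also have "\<dots> = transpose X ** (transpose A ** transpose Y ** transpose A)"
      by (simp add: matrix_transpose_mul matrix_mul_assoc)
    also have "\<dots> = (transpose X ** transpose A) ** (transpose Y ** transpose A)"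
      by (simp add: matrix_mul_assoc)
    also have "\<dots> = transpose (A ** X) ** transpose (A ** Y)" by (simp add: matrix_transpose_mul)
    also have "\<dots> = (A ** X) ** (A ** Y)" using assms(3,7) by simp
    also have "\<dots> = (A ** X ** A) ** Y" by (simp add: matrix_mul_assoc)
    also have "\<dots> = A ** Y" using assms(1) by simp
    finally show ?thesis .
  qed
  have XA: "X ** A = Y ** A"
  proof -
    have "X ** A = transpose A ** transpose X" using assms(4) by (metis matrix_transpose_mul)
    also have "\<dots> = transpose (A ** Y ** A) ** transpose X" using assms(5) by simp
    also have "\<dots> = (transpose A ** transpose Y ** transpose A) ** transpose X"
      by (simp add: matrix_transpose_mul matrix_mul_assoc)
    also have "\<dots> = (transpose A ** transpose Y) ** (transpose A ** transpose X)"
      by (simp add: matrix_mul_assoc)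
    also have "\<dots> = transpose (Y ** A) ** transpose (X ** A)" by (simp add: matrix_transpose_mul)
    also have "\<dots> = (Y ** A) ** (X ** A)" using assms(4,8) by simp
    also have "\<dots> = Y ** (A ** X ** A)" by (simp add: matrix_mul_assoc)
    also have "\<dots> = Y ** A" using assms(1) by simp
    finally show ?thesis .
  qed
  have "X = X ** (A ** X)" using assms(2) by (simp add: matrix_mul_assoc)
  also have "\<dots> = (X ** A) ** Y" using AX by (simp add: matrix_mul_assoc)
  also have "\<dots> = Y ** A ** Y" using XA by simp
  also have "\<dots> = Y" using assms(6) .
  finally show ?thesis .
qed

lemma subspace_orthogonal_projection:
  fixes S :: "(real^'m) set"
  assumes "subspace S"
  obtains P where "sym_mat P" "\<And>y. P *v y \<in> S" "\<And>s y. s \<in> S \<Longrightarrow> s \<bullet> (y - P *v y) = 0"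
proof -
  obtain B where B: "B \<subseteq> S" "pairwise orthogonal B" "\<And>b. b \<in> B \<Longrightarrow> norm b = 1"
    "independent B" "card B = dim S" "span B = S"
    using orthonormal_basis_subspace[OF assms] by blast
  have "finite B"
    using B(4) independent_imp_finite by blast
  define P where "P = (\<Sum>b\<in>B. outer_prod b)"
  have P: "P *v y = (\<Sum>b\<in>B. (b \<bullet> y) *\<^sub>R b)" for y
    by (simp add: P_def sum_outer_prod_mult_vec)
  have "P *v y \<in> S" for y
    unfolding P B(6)[symmetric] by (intro span_sum span_mul span_base)
  moreover have "b \<bullet> (y - P *v y) = 0" if "b \<in> B" for b y
  proof -
    have "b \<bullet> (P *v y) = (\<Sum>b'\<in>B. (b' \<bullet> y) * (b \<bullet> b'))"
      by (simp add: P inner_sum_right)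
    also have "\<dots> = b \<bullet> y"
      using that B(2,3) \<open>finite B\<close>
      by (simp add: sum.remove[of B b] pairwise_def orthogonal_def inner_commute norm_eq_1)
    finally show ?thesis
      by (simp add: inner_diff_right)
  qed
  moreover have "subspace {s. s \<bullet> (y - P *v y) = 0}" for y
    by (simp add: subspace_def inner_add_left)
  ultimately show thesis
    using that[of P] span_induct[of _ B] sym_mat_sum_outer_prod[of "\<lambda>b. b" B] unfolding B(6) P_def
    by blast
qed

lemma sym_mat_range_projection:
  fixes A :: "real^'m^'m"
  assumes sym: "sym_mat A"
  obtains P where "sym_mat P" "P ** A = A" "A ** P = A" "\<And>y. P *v y \<in> range ((*v) A)"
proof -
  let ?S = "range ((*v) A)"
  have "subspace ?S"
    by (simp add: linear_subspace_image)
  then obtain P where P: "sym_mat P" "\<And>y. P *v y \<in> ?S" and orth: "\<And>s y. s \<in> ?S \<Longrightarrow> s \<bullet> (y - P *v y) = 0"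
    by (rule subspace_orthogonal_projection) blast
  have "P *v s = s" if "s \<in> ?S" for s
  proof -
    have "s - P *v s \<in> ?S"
      using that P(2) by (simp add: subspace_diff linear_subspace_image)
    then have "(s - P *v s) \<bullet> (s - P *v s) = 0"
      by (rule orth)
    then show ?thesis
      by simp
  qed
  then have "P ** A = A"
    by (simp add: matrix_eq flip: matrix_vector_mul_assoc)
  moreover have "A ** P = A"
  proof -
    have "(A *v (y - P *v y)) \<bullet> z = 0" for y z
      using orth[of "A *v z" y] sym_mat_inner_commute[OF sym, of "y - P *v y" z]
      by (simp add: inner_commute)
    then have "A *v (P *v y) = A *v y" for y
      by (metis inner_eq_zero_iff matrix_vector_mult_diff_distrib right_minus_eq)
    then show ?thesis
      by (simp add: matrix_eq flip: matrix_vector_mul_assoc)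
  qed
  ultimately show thesis
    using that P by blast
qed

lemma sym_mat_inj_on_range:
  fixes A :: "real^'m^'m"
  assumes sym: "sym_mat A"
  shows "inj_on ((*v) A) (range ((*v) A))"
proof (rule inj_onI)
  fix s s' assume "s \<in> range ((*v) A)" "s' \<in> range ((*v) A)" "A *v s = A *v s'"
  then obtain x x' where "s = A *v x" "s' = A *v x'"
    by auto
  then have "s - s' = A *v (x - x')"
    by (simp add: matrix_vector_mult_diff_distrib)
  moreover have "A *v (s - s') = 0"
    using \<open>A *v s = A *v s'\<close> by (simp add: matrix_vector_mult_diff_distrib)
  ultimately have "(s - s') \<bullet> (s - s') = 0"
    using sym_mat_inner_commute[OF sym, of "x - x'" "s - s'"] by (simp add: inner_commute)
  then show "s = s'"
    by simp
qed

lemma sym_mat_penrose_exists: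
  fixes A :: "real^'m^'m"
  assumes sym: "sym_mat A"
  obtains X where "A ** X ** A = A" "X ** A ** X = X" "transpose (A ** X) = A ** X"
    "transpose (X ** A) = X ** A"
proof -
  let ?S = "range ((*v) A)"
  obtain P where P: "sym_mat P" "P ** A = A" "A ** P = A" "\<And>y. P *v y \<in> ?S"
    using sym_mat_range_projection[OF sym] by blast
  have "span ?S = ?S"
    by (simp add: linear_subspace_image)
  have "inj_on ((*v) A) (span ?S)"
    unfolding \<open>span ?S = ?S\<close> by (rule sym_mat_inj_on_range[OF sym])
  then obtain g where g: "linear g" "\<And>x. x \<in> span ?S \<Longrightarrow> g (A *v x) = x" "range g \<subseteq> span ?S"
    using linear_inj_on_left_inverse[of "(*v) A" ?S] by (metis matrix_vector_mul_linear)
  define X where "X = matrix (\<lambda>y. g (P *v y))"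
  have X: "X *v y = g (P *v y)" for y
    unfolding X_def using g(1)
    by (intro matrix_works) (simp add: linear_matrix_vector_mul_eq linear_compose[unfolded o_def])
  have P_fix: "P *v s = s" if "s \<in> ?S" for s
    using that P(2) by (auto simp: matrix_vector_mul_assoc)
  have gA: "g (A *v x) = P *v x" for x
    using g(2)[of "P *v x"] P(3,4) \<open>span ?S = ?S\<close> by (simp add: matrix_vector_mul_assoc)
  have XA: "X ** A = P"
    by (simp add: matrix_eq X gA P_fix flip: matrix_vector_mul_assoc)
  have AX: "A ** X = P"
  proof -
    have "A *v g (P *v y) = P *v y" for y
      using P(4)[of y] gA P(3) by (auto simp: matrix_vector_mul_assoc)
    then show ?thesis
      by (simp add: matrix_eq X flip: matrix_vector_mul_assoc)
  qed
  have XAX: "X ** A ** X = X"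
    using g(3) \<open>span ?S = ?S\<close> by (simp add: XA matrix_eq X P_fix image_subset_iff flip: matrix_vector_mul_assoc)
  have AXA: "A ** X ** A = A"
    using P(2) by (simp add: AX)
  show thesis
    using that[OF AXA XAX] P(1) by (simp add: AX XA sym_mat_def)
qed

lemma mp_inv_sym_mat:
  fixes A :: "real^'m^'m"
  assumes sym: "sym_mat A"
  shows "A ** mp_inv A ** A = A" "mp_inv A ** A ** mp_inv A = mp_inv A"
    "sym_mat (A ** mp_inv A)" "sym_mat (mp_inv A ** A)" "sym_mat (mp_inv A)"
proof -
  obtain X where X: "A ** X ** A = A" "X ** A ** X = X" "transpose (A ** X) = A ** X"
    "transpose (X ** A) = X ** A"
    using sym_mat_penrose_exists[OF sym] .
  have "mp_inv A = X"
    unfolding mp_inv_def by (rule the_equality) (use X penrose_unique in blast)+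
  moreover have "transpose X = X"
  proof (rule penrose_unique[OF _ _ _ _ X])
    show "A ** transpose X ** A = A" "transpose X ** A ** transpose X = transpose X"
      using arg_cong[OF X(1), of transpose] arg_cong[OF X(2), of transpose] sym
      by (simp_all add: matrix_transpose_mul matrix_mul_assoc sym_mat_def)
    show "transpose (A ** transpose X) = A ** transpose X" "transpose (transpose X ** A) = transpose X ** A"
      using X(3,4) sym by (simp_all add: matrix_transpose_mul sym_mat_def)
  qed
  ultimately show "A ** mp_inv A ** A = A" "mp_inv A ** A ** mp_inv A = mp_inv A"
    "sym_mat (A ** mp_inv A)" "sym_mat (mp_inv A ** A)" "sym_mat (mp_inv A)"
    using X by (simp_all add: sym_mat_def)
qed

definition ker_proj :: "real^'m^'m \<Rightarrow> real^'m^'m" where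
  "ker_proj A = mat 1 - mp_inv A ** A"

lemma ker_proj_mult_vec: "ker_proj A *v x = x - mp_inv A *v (A *v x)"
  by (simp add: ker_proj_def matrix_vector_mult_diff_rdistrib matrix_vector_mul_assoc)

lemma ker_proj_sym_mat:
  assumes "sym_mat A"
  shows mult_ker_proj_vec: "A *v (ker_proj A *v x) = 0"
    and sym_mat_ker_proj: "sym_mat (ker_proj A)"
    and ker_proj_idem: "ker_proj A *v (ker_proj A *v x) = ker_proj A *v x"
    and ker_proj_kernel: "A *v z = 0 \<Longrightarrow> ker_proj A *v z = z"
proof -
  note mp = mp_inv_sym_mat[OF assms]
  show AP: "A *v (ker_proj A *v x) = 0" for x
    using mp(1) by (simp add: ker_proj_mult_vec matrix_vector_mult_diff_distrib matrix_vector_mul_assoc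
        matrix_mul_assoc)
  show "sym_mat (ker_proj A)"
    using mp(4) by (simp add: ker_proj_def sym_mat_def transpose_def vec_eq_iff mat_def)
  show "ker_proj A *v (ker_proj A *v x) = ker_proj A *v x"
    by (subst ker_proj_mult_vec[of A "ker_proj A *v x"]) (simp add: AP)
  show "A *v z = 0 \<Longrightarrow> ker_proj A *v z = z"
    by (simp add: ker_proj_mult_vec)
qed

lemma shifted_quadratic_form:
  fixes A M :: "real^'m^'m" and \<rho> :: real
  assumes symA: "sym_mat A" and symM: "sym_mat M"
  defines "Z \<equiv> mp_inv A + \<rho> *\<^sub>R ker_proj A"
  shows "(r - Z *v s) \<bullet> (M *v (r - Z *v s)) = r \<bullet> (M *v r) - s \<bullet> (mp_inv A *v s)
    - 2 * \<rho> * (norm (ker_proj A *v s))\<^sup>2 - 2 * ((Z *v s) \<bullet> (M *v r - s)) + (Z *v s) \<bullet> ((M - A) *v (Z *v s))"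
proof -
  note mp = mp_inv_sym_mat[OF symA]
  define g where "g = mp_inv A *v s"
  define p where "p = ker_proj A *v s"
  define z where "z = Z *v s"
  have z: "z = g + \<rho> *\<^sub>R p"
    by (simp add: z_def Z_def g_def p_def matrix_vector_mult_add_rdistrib scaleR_matrix_vector_assoc)
  have Ap: "A *v p = 0"
    by (simp add: p_def mult_ker_proj_vec[OF symA])
  have pA: "p \<bullet> (A *v y) = 0" for y
    using sym_mat_inner_commute[OF symA, of p y] Ap by simp
  have gAg: "g \<bullet> (A *v g) = s \<bullet> g"
    using sym_mat_inner_commute[OF mp(5), of s "A *v g"] mp(2)
    by (simp add: g_def matrix_vector_mul_assoc matrix_mul_assoc)
  have ps: "p \<bullet> s = (norm p)\<^sup>2"
    using sym_mat_inner_commute[OF sym_mat_ker_proj[OF symA], of p s] ker_proj_idem[OF symA, of s]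
    by (simp add: p_def power2_norm_eq_inner inner_commute)
  have gs: "g \<bullet> s = s \<bullet> g"
    by (rule inner_commute)
  have "(r - z) \<bullet> (M *v (r - z)) = r \<bullet> (M *v r) - 2 * (z \<bullet> (M *v r)) + z \<bullet> (M *v z)"
    using sym_mat_inner_commute[OF symM, of r z]
    by (simp add: matrix_vector_mult_diff_distrib inner_diff_left inner_diff_right inner_commute)
  also have "\<dots> = r \<bullet> (M *v r) - 2 * (z \<bullet> s) - 2 * (z \<bullet> (M *v r - s)) + z \<bullet> (A *v z)
      + z \<bullet> ((M - A) *v z)"
    by (simp add: inner_diff_right matrix_vector_mult_diff_rdistrib)
  also have "z \<bullet> s = s \<bullet> g + \<rho> * (norm p)\<^sup>2"
    by (simp add: z inner_add_left ps gs)
  also have "z \<bullet> (A *v z) = s \<bullet> g"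
    by (simp add: z matrix_vector_right_distrib matrix_vector_mult_scaleR Ap inner_add_left pA gAg)
  finally show ?thesis
    by (simp add: z_def g_def p_def algebra_simps)
qed

section \<open>Finsler's lemma\<close>

lemma finsler_sphere:
  fixes Q q :: "'a::euclidean_space \<Rightarrow> real"
  assumes cQ: "continuous_on UNIV Q" and cq: "continuous_on UNIV q"
    and q_nonneg: "\<And>d. q d \<ge> 0" and pos: "\<And>d. d \<noteq> 0 \<Longrightarrow> q d = 0 \<Longrightarrow> Q d > 0"
  obtains \<rho> \<gamma> where "\<gamma> > 0" "\<rho> \<ge> 0" "\<And>d. norm d = 1 \<Longrightarrow> Q d + \<rho> * q d \<ge> \<gamma>"
proof -
  define S where "S = sphere (0::'a) 1"
  have "compact S" "S \<noteq> {}"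
    by (simp_all add: S_def)
  define g where "g d = q d + max (Q d) 0" for d
  have "continuous_on S g"
    unfolding g_def
    by (intro continuous_intros continuous_on_subset[OF cQ] continuous_on_subset[OF cq]) auto
  then obtain d0 where "d0 \<in> S" and d0: "\<And>y. y \<in> S \<Longrightarrow> g d0 \<le> g y"
    using continuous_attains_inf[OF \<open>compact S\<close> \<open>S \<noteq> {}\<close>] by blast
  obtain d1 where d1: "\<And>y. y \<in> S \<Longrightarrow> Q d1 \<le> Q y"
    using continuous_attains_inf[OF \<open>compact S\<close> \<open>S \<noteq> {}\<close> continuous_on_subset[OF cQ]] by blast
  define \<gamma> where "\<gamma> = g d0"
  have "\<gamma> > 0"
  proof -
    have "d0 \<noteq> 0"
      using \<open>d0 \<in> S\<close> by (auto simp: S_def)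
    then have "q d0 > 0 \<or> Q d0 > 0"
      using pos[of d0] q_nonneg[of d0] by force
    then show ?thesis
      using q_nonneg[of d0] by (auto simp: \<gamma>_def g_def)
  qed
  define \<rho> where "\<rho> = 2 * (\<bar>Q d1\<bar> + \<gamma>) / \<gamma>"
  have "\<rho> \<ge> 0"
    using \<open>\<gamma> > 0\<close> by (simp add: \<rho>_def)
  have "Q d + \<rho> * q d \<ge> \<gamma> / 2" if "d \<in> S" for d
  proof (cases "Q d \<ge> \<gamma> / 2")
    case True
    then show ?thesis
      using q_nonneg[of d] \<open>\<rho> \<ge> 0\<close> by (smt (verit) mult_nonneg_nonneg)
  next
    case False
    have "g d \<ge> \<gamma>"
      using d0[OF that] by (simp add: \<gamma>_def)
    then have "q d \<ge> \<gamma> / 2"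
      using False \<open>\<gamma> > 0\<close> q_nonneg[of d] by (simp add: g_def max_def split: if_splits)
    then have "\<rho> * q d \<ge> \<rho> * (\<gamma> / 2)"
      using \<open>\<rho> \<ge> 0\<close> by (rule mult_left_mono)
    moreover have "\<rho> * (\<gamma> / 2) = \<bar>Q d1\<bar> + \<gamma>"
      using \<open>\<gamma> > 0\<close> by (simp add: \<rho>_def)
    ultimately show ?thesis
      using d1[OF that] \<open>\<gamma> > 0\<close> by linarith
  qed
  then show thesis
    using that[of "\<gamma> / 2" \<rho>] \<open>\<gamma> > 0\<close> \<open>\<rho> \<ge> 0\<close> by (simp add: S_def)
qed

lemma finsler_quadratic:
  fixes Q q :: "'a::euclidean_space \<Rightarrow> real"
  assumes cQ: "continuous_on UNIV Q" and cq: "continuous_on UNIV q"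
    and hom_Q: "\<And>c d. Q (c *\<^sub>R d) = c\<^sup>2 * Q d" and hom_q: "\<And>c d. q (c *\<^sub>R d) = c\<^sup>2 * q d"
    and q_nonneg: "\<And>d. q d \<ge> 0" and pos: "\<And>d. d \<noteq> 0 \<Longrightarrow> q d = 0 \<Longrightarrow> Q d > 0"
  obtains \<rho> c where "c > 0" "\<rho> \<ge> 0" "\<And>d. Q d + \<rho> * q d \<ge> c * (norm d)\<^sup>2"
proof -
  obtain \<rho> \<gamma> where "\<gamma> > 0" "\<rho> \<ge> 0" and sphere: "\<And>d. norm d = 1 \<Longrightarrow> Q d + \<rho> * q d \<ge> \<gamma>"
    using finsler_sphere[OF cQ cq q_nonneg pos] by blast
  have "Q d + \<rho> * q d \<ge> \<gamma> * (norm d)\<^sup>2" for d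
  proof (cases "d = 0")
    case True
    then show ?thesis
      using hom_Q[of 0 0] hom_q[of 0 0] by simp
  next
    case False
    define e where "e = (1 / norm d) *\<^sub>R d"
    have "norm e = 1" and de: "d = norm d *\<^sub>R e"
      using False by (simp_all add: e_def)
    have "Q d + \<rho> * q d = (norm d)\<^sup>2 * (Q e + \<rho> * q e)"
      by (subst (1 2) de) (simp add: hom_Q hom_q algebra_simps)
    also have "\<dots> \<ge> (norm d)\<^sup>2 * \<gamma>"
      using sphere[OF \<open>norm e = 1\<close>] by (intro mult_left_mono) auto
    finally show ?thesis
      by (simp add: mult.commute)
  qed
  then show thesis
    using that \<open>\<gamma> > 0\<close> \<open>\<rho> \<ge> 0\<close> by blast
qed

section \<open>The certificate at a KKT point\<close>

definition mderiv :: "(real^'n \<Rightarrow> real^'m^'m) \<Rightarrow> real^'n \<Rightarrow> real^'n \<Rightarrow> real^'m^'m" where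
  "mderiv G x d = (\<Sum>i\<in>UNIV. d $ i *\<^sub>R mpartial i G x)"

lemma mderiv_entry: "mderiv G x d $ k $ l = d \<bullet> grad (\<lambda>y. G y $ k $ l) x"
  by (simp add: mderiv_def mpartial_def grad_def inner_vec_def)

lemma mderiv_axis: "mderiv G x (axis i 1) = mpartial i G x"
  by (simp add: vec_eq_iff mderiv_entry mpartial_def grad_def inner_axis')

lemma polymat_has_derivative:
  assumes "\<And>k l. (\<lambda>x. G x $ k $ l) \<in> polyfun"
  shows "(G has_derivative mderiv G x) (at x)"
  using polyfun_has_derivative[OF assms] by (simp add: has_derivative_vec_nth_iff mderiv_entry inner_commute)

lemma sym_mat_mderiv:
  assumes "\<And>x. sym_mat (G x)"
  shows "sym_mat (mderiv G x d)"
proof -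
  have "(\<lambda>y. G y $ l $ k) = (\<lambda>y. G y $ k $ l)" for k l
    using sym_mat_entry[OF assms] by blast
  then show ?thesis
    by (simp add: sym_mat_def transpose_def vec_eq_iff mderiv_entry)
qed

lemma sum_scaleR_matrix_mult:
  "(\<Sum>i\<in>I. c i *\<^sub>R B i) ** (A :: real^'n^'m) = (\<Sum>i\<in>I. c i *\<^sub>R (B i ** A))"
  "A ** (\<Sum>i\<in>I. c i *\<^sub>R B i) = (\<Sum>i\<in>I. c i *\<^sub>R (A ** B i))"
  by (simp_all add: matrix_eq matrix_vector_mult_sum linear_sum[OF matrix_vector_mul_linear] o_def
      matrix_vector_mult_scaleR flip: matrix_vector_mul_assoc scaleR_matrix_vector_assoc)

lemma quadratic_form_sum: "d \<bullet> (H *v d) = (\<Sum>i\<in>UNIV. \<Sum>j\<in>UNIV. d $ i * d $ j * H $ i $ j)"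
  by (simp add: inner_vec_def matrix_vector_mult_def sum_distrib_left mult_ac)

lemma transpose_sandwich_eq_zero:
  fixes E :: "real^'k^'m" and M :: "real^'m^'m"
  assumes "\<And>x y. (E *v x) \<bullet> (M *v (E *v y)) = 0"
  shows "transpose E ** M ** E = 0"
proof -
  have "x \<bullet> (transpose E *v (M *v (E *v y))) = 0" for x y
    using assms[of x y] dot_lmul_matrix[of x "transpose E"] by simp
  then have "transpose E *v (M *v (E *v y)) = 0" for y
    by (metis inner_eq_zero_iff)
  then show ?thesis
    by (simp add: matrix_eq flip: matrix_vector_mul_assoc)
qed

lemma abs_shifted_form_error_le:
  fixes D0 D1 :: "real^'m^'m"
  assumes z: "norm z \<le> c * n" and D1: "norm D1 \<le> \<eta> * n" and D0: "norm D0 \<le> \<eta>"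
    and "0 \<le> \<eta>" "0 \<le> c"
  shows "\<bar>2 * (z \<bullet> (D1 *v r)) - z \<bullet> (D0 *v z)\<bar> \<le> \<eta> * (2 * c * norm r + c\<^sup>2) * n\<^sup>2"
proof -
  have "\<bar>z \<bullet> (D1 *v r)\<bar> \<le> norm D1 * norm z * norm r"
    by (rule abs_inner_matrix_vector_le)
  also have "\<dots> \<le> (\<eta> * n) * (c * n) * norm r"
    using order_trans[OF norm_ge_zero D1] by (intro mult_right_mono mult_mono D1 z) auto
  finally have first: "\<bar>z \<bullet> (D1 *v r)\<bar> \<le> \<eta> * c * norm r * n\<^sup>2"
    by (simp add: power2_eq_square mult_ac)
  have "\<bar>z \<bullet> (D0 *v z)\<bar> \<le> norm D0 * norm z * norm z"
    by (rule abs_inner_matrix_vector_le)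
  also have "\<dots> \<le> \<eta> * (c * n) * (c * n)"
    using order_trans[OF norm_ge_zero z] \<open>0 \<le> \<eta>\<close> by (intro mult_mono D0 z) auto
  finally have second: "\<bar>z \<bullet> (D0 *v z)\<bar> \<le> \<eta> * c\<^sup>2 * n\<^sup>2"
    by (simp add: power2_eq_square mult_ac)
  from first second show ?thesis
    by (simp add: algebra_simps)
qed

locale kkt_point =
  fixes f :: "real^'n \<Rightarrow> real" and G :: "real^'n \<Rightarrow> real^'m^'m" and u :: "real^'n"
    and \<Lambda> :: "real^'m^'m" and N :: nat and R :: "nat \<Rightarrow> real^'m"
  assumes f_poly: "f \<in> polyfun" and G_poly: "polymat_sym G" and feasible: "psd (G u)"
    and KKT: "KKT f G u \<Lambda>" and \<Lambda>_factors: "\<Lambda> = (\<Sum>t<N. outer_prod (R t))"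
begin

lemma G_entry_poly: "(\<lambda>x. G x $ k $ l) \<in> polyfun"
  using G_poly by (simp add: polymat_sym_def)

lemma sym_G: "sym_mat (G x)"
  using G_poly by (simp add: polymat_sym_def)

lemma G_has_derivative: "(G has_derivative mderiv G x) (at x)"
  by (rule polymat_has_derivative[OF G_entry_poly])

lemma sym_mderiv: "sym_mat (mderiv G x d)"
  by (rule sym_mat_mderiv[OF sym_G])

lemma linear_mderiv: "linear (mderiv G x)"
  using G_has_derivative has_derivative_linear by blast

lemma G_factor_eq_zero:
  assumes "t < N"
  shows "G u *v R t = 0"
proof -
  have "(\<Sum>t<N. outer_prod (R t)) \<bullet> G u = 0"
    using KKT by (simp add: KKT_def frob_eq_inner flip: \<Lambda>_factors)
  then show ?thesis
    by (rule psd_inner_sum_outer_prod_eq_zero[OF feasible _ assms])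
qed

lemma G_mult_\<Lambda>: "G u ** \<Lambda> = 0"
proof -
  have "G u *v (\<Lambda> *v x) = (\<Sum>t<N. (R t \<bullet> x) *\<^sub>R (G u *v R t))" for x
    by (simp add: \<Lambda>_factors sum_outer_prod_mult_vec linear_sum[OF matrix_vector_mul_linear] o_def
        matrix_vector_mult_scaleR)
  also have "\<dots> x = 0" for x
    by (rule sum.neutral) (simp add: G_factor_eq_zero)
  finally show ?thesis
    by (simp add: matrix_eq flip: matrix_vector_mul_assoc)
qed

abbreviation "L \<equiv> Lag f G \<Lambda>"

lemma Lag_poly: "L \<in> polyfun"
proof -
  have "(\<lambda>x. \<Lambda> \<bullet> G x) = (\<lambda>x. \<Sum>k\<in>UNIV. \<Sum>l\<in>UNIV. \<Lambda> $ k $ l * G x $ k $ l)"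
    by (simp add: inner_vec_def)
  also have "\<dots> \<in> polyfun"
    by (rule polyfun_sum, rule polyfun_sum, rule polyfun.pmult, rule polyfun.pconst, rule G_entry_poly)
  finally show ?thesis
    unfolding Lag_def[abs_def] frob_eq_inner by (rule polyfun_diffI[OF f_poly])
qed

lemma Lag_at_u: "L u = f u"
  using KKT by (simp add: Lag_def KKT_def)

lemma grad_Lag_eq_zero: "grad L u = 0"
proof -
  have "(L has_derivative (\<lambda>v. v \<bullet> grad f u - \<Lambda> \<bullet> mderiv G u v)) (at u)"
    unfolding Lag_def[abs_def] frob_eq_inner
    by (intro has_derivative_diff polyfun_has_derivative f_poly
        bounded_linear.has_derivative[OF bounded_linear_inner_right G_has_derivative])
  then have "partial i L u = grad f u $ i - \<Lambda> \<bullet> mpartial i G u" for i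
    by (simp add: partial_eq_derivative mderiv_axis inner_axis')
  then show ?thesis
    using KKT by (simp add: KKT_def grad_def vec_eq_iff frob_eq_inner inner_commute)
qed

abbreviation "DG \<equiv> mderiv G u"

lemma inner_\<Lambda>_sandwich: "\<Lambda> \<bullet> (DG d ** X ** DG d) = (\<Sum>t<N. (DG d *v R t) \<bullet> (X *v (DG d *v R t)))"
  using sym_mat_inner_commute[OF sym_mderiv]
  by (simp add: \<Lambda>_factors inner_sum_outer_prod flip: matrix_vector_mul_assoc)

lemma Hterm_quadratic:
  "d \<bullet> (Hterm G u \<Lambda> *v d) = 2 * (\<Lambda> \<bullet> (DG d ** mp_inv (G u) ** DG d))"
proof -
  define M where "M i = mpartial i G u" for i
  have "d \<bullet> (Hterm G u \<Lambda> *v d) = (\<Sum>i\<in>UNIV. \<Sum>j\<in>UNIV. d $ i * d $ j * Hterm G u \<Lambda> $ i $ j)"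
    by (rule quadratic_form_sum)
  also have "\<dots> = (\<Sum>j\<in>UNIV. \<Sum>i\<in>UNIV. d $ i * d $ j * Hterm G u \<Lambda> $ i $ j)"
    by (rule sum.swap)
  also have "\<dots> = 2 * (\<Lambda> \<bullet> (\<Sum>j\<in>UNIV. d $ j *\<^sub>R (\<Sum>i\<in>UNIV. d $ i *\<^sub>R (M i ** mp_inv (G u) ** M j))))"
    by (simp add: Hterm_def M_def frob_eq_inner inner_sum_right sum_distrib_left mult_ac)
  also have "(\<Sum>j\<in>UNIV. d $ j *\<^sub>R (\<Sum>i\<in>UNIV. d $ i *\<^sub>R (M i ** mp_inv (G u) ** M j)))
      = DG d ** mp_inv (G u) ** DG d"
    by (simp add: mderiv_def M_def sum_scaleR_matrix_mult)
  finally show ?thesis .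
qed

lemma linear_mderiv_factor: "linear (\<lambda>d. A *v (DG d *v r))"
  by (rule linearI) (simp_all add: linear_add[OF linear_mderiv] linear_cmul[OF linear_mderiv]
      matrix_vector_mult_add_rdistrib matrix_vector_right_distrib matrix_vector_mult_scaleR
      flip: scaleR_matrix_vector_assoc)

definition crit_penalty :: "real^'n \<Rightarrow> real" where
  "crit_penalty d = (\<Sum>t<N. (norm (ker_proj (G u) *v (DG d *v R t)))\<^sup>2)"

lemma crit_penalty_nonneg: "crit_penalty d \<ge> 0"
  by (simp add: crit_penalty_def sum_nonneg)

lemma crit_penalty_scaleR: "crit_penalty (c *\<^sub>R d) = c\<^sup>2 * crit_penalty d"
  using linear.scaleR[OF linear_mderiv_factor, of "ker_proj (G u)"]
  by (simp add: crit_penalty_def power_mult_distrib sum_distrib_left)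

lemma continuous_crit_penalty: "continuous_on UNIV crit_penalty"
  unfolding crit_penalty_def
  by (intro continuous_intros linear_continuous_on linear_conv_bounded_linear[THEN iffD1]
      linear_mderiv_factor)

lemma crit_penalty_zero_imp_critical:
  assumes "kernel_cols (G u) E" and "SCC G u \<Lambda>" and "crit_penalty d = 0"
  shows "(\<Sum>i\<in>UNIV. d $ i *\<^sub>R (transpose E ** mpartial i G u ** E)) = 0"
proof -
  have kernel: "{z. G u *v z = 0} = range ((*v) \<Lambda>)"
    using sym_mat_kernel_eq_range[OF sym_G G_mult_\<Lambda>] assms(2) by (simp add: SCC_def)
  have "\<forall>t\<in>{..<N}. (norm (ker_proj (G u) *v (DG d *v R t)))\<^sup>2 = 0"
    using assms(3) sum_nonneg_eq_0_iff[of "{..<N}" "\<lambda>t. (norm (ker_proj (G u) *v (DG d *v R t)))\<^sup>2"]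
    by (simp add: crit_penalty_def)
  then have proj_zero: "ker_proj (G u) *v (DG d *v R t) = 0" if "t < N" for t
    using that by simp
  have "(E *v x) \<bullet> (DG d *v (E *v y)) = 0" for x y
  proof -
    have "G u *v (E *v x) = 0" "G u *v (E *v y) = 0"
      using assms(1) by (auto simp: kernel_cols_def)
    then obtain w where w: "E *v y = \<Lambda> *v w" and Ex: "ker_proj (G u) *v (E *v x) = E *v x"
      using kernel ker_proj_kernel[OF sym_G] by blast
    have "(E *v x) \<bullet> (DG d *v R t) = 0" if "t < N" for t
      using sym_mat_inner_commute[OF sym_mat_ker_proj[OF sym_G[of u]], of "E *v x" "DG d *v R t"]
      by (simp add: Ex proj_zero[OF that])
    then show ?thesis
      by (simp add: w \<Lambda>_factors sum_outer_prod_mult_vec linear_sum[OF matrix_vector_mul_linear] o_def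
          matrix_vector_mult_scaleR inner_sum_right)
  qed
  then have "transpose E ** DG d ** E = 0"
    by (rule transpose_sandwich_eq_zero)
  then show ?thesis
    by (simp add: mderiv_def sum_scaleR_matrix_mult)
qed

lemma sosc_quadratic_growth:
  assumes "kernel_cols (G u) E" and "SCC G u \<Lambda>" and "SOSC f G u \<Lambda> E"
  obtains \<rho> c where "c > 0" "\<rho> \<ge> 0"
    "\<And>d. d \<bullet> ((hess L u + Hterm G u \<Lambda>) *v d) + \<rho> * crit_penalty d \<ge> c * (norm d)\<^sup>2"
proof (rule finsler_quadratic[OF _ continuous_crit_penalty _ crit_penalty_scaleR crit_penalty_nonneg])
  show "continuous_on UNIV (\<lambda>d. d \<bullet> ((hess L u + Hterm G u \<Lambda>) *v d))"
    by (intro continuous_intros linear_continuous_on matrix_vector_mul_bounded_linear)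
  show "(c *\<^sub>R d) \<bullet> ((hess L u + Hterm G u \<Lambda>) *v (c *\<^sub>R d)) = c\<^sup>2 * (d \<bullet> ((hess L u + Hterm G u \<Lambda>) *v d))"
    for c d
    by (simp add: matrix_vector_mult_scaleR power2_eq_square)
  show "d \<bullet> ((hess L u + Hterm G u \<Lambda>) *v d) > 0" if "d \<noteq> 0" "crit_penalty d = 0" for d
    using assms(3) that crit_penalty_zero_imp_critical[OF assms(1,2) that(2)] by (simp add: SOSC_def)
qed (use that in auto)

definition cert_matrix :: "real \<Rightarrow> real^'m^'m" where
  "cert_matrix \<rho> = mp_inv (G u) + \<rho> *\<^sub>R ker_proj (G u)"

definition cert_vec :: "real \<Rightarrow> nat \<Rightarrow> real^'n \<Rightarrow> real^'m" where
  "cert_vec \<rho> t x = R t - cert_matrix \<rho> *v (DG (x - u) *v R t)"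

definition certificate :: "real \<Rightarrow> real^'n \<Rightarrow> real" where
  "certificate \<rho> x = (\<Sum>t<N. cert_vec \<rho> t x \<bullet> (G x *v cert_vec \<rho> t x))"

lemma certificate_QM: "certificate \<rho> \<in> QM G"
proof -
  have "(\<lambda>x::real^'n. 0) \<in> SOS"
    unfolding SOS_def by (rule CollectI, rule exI[of _ 0]) simp
  moreover have "(\<lambda>x. cert_vec \<rho> t x $ k) \<in> polyfun" for t k
  proof -
    define h where "h d = (cert_matrix \<rho> *v (DG d *v R t)) $ k" for d
    have "linear h"
      unfolding h_def using linear_compose[OF linear_mderiv_factor bounded_linear_vec_nth[THEN bounded_linear.linear]]
      by (simp add: o_def)
    have "cert_vec \<rho> t x $ k = R t $ k - (h x - h u)" for x
      using linear_diff[OF \<open>linear h\<close>, of x u] by (simp add: cert_vec_def h_def)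
    moreover have "(\<lambda>x. R t $ k - (h x - h u)) \<in> polyfun"
      using \<open>linear h\<close> by (intro polyfun_diffI polyfun.pconst linear_polyfun)
    ultimately show ?thesis
      by simp
  qed
  ultimately show ?thesis
    unfolding QM_def certificate_def
    by (intro CollectI exI[of _ "\<lambda>x. 0"] exI[of _ N] exI[of _ "cert_vec \<rho>"]) auto
qed

definition cert_error :: "real \<Rightarrow> real^'n \<Rightarrow> real" where
  "cert_error \<rho> d = (\<Sum>t<N. let z = cert_matrix \<rho> *v (DG d *v R t) in
     2 * (z \<bullet> ((G (u + d) - G u - DG d) *v R t)) - z \<bullet> ((G (u + d) - G u) *v z))"

lemma certificate_expansion:
  "certificate \<rho> (u + d) = \<Lambda> \<bullet> G (u + d) - \<Lambda> \<bullet> (DG d ** mp_inv (G u) ** DG d)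
     - 2 * (\<rho> * crit_penalty d) - cert_error \<rho> d"
proof -
  have "cert_vec \<rho> t (u + d) \<bullet> (G (u + d) *v cert_vec \<rho> t (u + d))
      = R t \<bullet> (G (u + d) *v R t) - (DG d *v R t) \<bullet> (mp_inv (G u) *v (DG d *v R t))
        - 2 * \<rho> * (norm (ker_proj (G u) *v (DG d *v R t)))\<^sup>2
        - (let z = cert_matrix \<rho> *v (DG d *v R t) in
           2 * (z \<bullet> ((G (u + d) - G u - DG d) *v R t)) - z \<bullet> ((G (u + d) - G u) *v z))"
    if "t < N" for t
    using shifted_quadratic_form[OF sym_G sym_G, where \<rho>=\<rho> and r="R t" and s="DG d *v R t"]
      G_factor_eq_zero[OF that]
    by (simp add: cert_vec_def cert_matrix_def Let_def matrix_vector_mult_diff_rdistrib)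
  then have "certificate \<rho> (u + d) = (\<Sum>t<N. R t \<bullet> (G (u + d) *v R t))
      - (\<Sum>t<N. (DG d *v R t) \<bullet> (mp_inv (G u) *v (DG d *v R t))) - 2 * (\<rho> * crit_penalty d) - cert_error \<rho> d"
    by (simp add: certificate_def cert_error_def crit_penalty_def sum_subtractf sum_distrib_left mult.assoc)
  then show ?thesis
    unfolding inner_\<Lambda>_sandwich by (simp add: \<Lambda>_factors inner_sum_outer_prod)
qed

lemma cert_error_bound:
  obtains C where "C \<ge> 0"
    and "\<And>\<eta> d. 0 \<le> \<eta> \<Longrightarrow> norm (G (u + d) - G u - DG d) \<le> \<eta> * norm d \<Longrightarrow>
      norm (G (u + d) - G u) \<le> \<eta> \<Longrightarrow> \<bar>cert_error \<rho> d\<bar> \<le> \<eta> * C * (norm d)\<^sup>2"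
proof -
  have "bounded_linear DG"
    using G_has_derivative has_derivative_bounded_linear by blast
  define c where "c t = norm (cert_matrix \<rho>) * onorm DG * norm (R t)" for t
  have c_nonneg: "c t \<ge> 0" for t
    using onorm_pos_le[OF \<open>bounded_linear DG\<close>] by (simp add: c_def)
  have z_le: "norm (cert_matrix \<rho> *v (DG d *v R t)) \<le> c t * norm d" for t d
  proof -
    have "norm (cert_matrix \<rho> *v (DG d *v R t)) \<le> norm (cert_matrix \<rho>) * (norm (DG d) * norm (R t))"
      using norm_matrix_vector_mult_le[of "cert_matrix \<rho>"] norm_matrix_vector_mult_le[of "DG d" "R t"]
      by (meson mult_left_mono norm_ge_zero order_trans)
    also have "\<dots> \<le> norm (cert_matrix \<rho>) * (onorm DG * norm d * norm (R t))"
      using onorm[OF \<open>bounded_linear DG\<close>] by (intro mult_left_mono mult_right_mono) auto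
    finally show ?thesis
      by (simp add: c_def mult_ac)
  qed
  define C where "C = (\<Sum>t<N. 2 * c t * norm (R t) + (c t)\<^sup>2)"
  show thesis
  proof (rule that)
    show "C \<ge> 0"
      using c_nonneg by (simp add: C_def sum_nonneg)
    fix \<eta> d
    assume "0 \<le> \<eta>" and \<Delta>1: "norm (G (u + d) - G u - DG d) \<le> \<eta> * norm d"
      and \<Delta>0: "norm (G (u + d) - G u) \<le> \<eta>"
    have term_le: "\<bar>2 * (z \<bullet> ((G (u + d) - G u - DG d) *v R t)) - z \<bullet> ((G (u + d) - G u) *v z)\<bar>
        \<le> \<eta> * (2 * c t * norm (R t) + (c t)\<^sup>2) * (norm d)\<^sup>2"
      if "z = cert_matrix \<rho> *v (DG d *v R t)" for z t
      using abs_shifted_form_error_le[OF _ \<Delta>1 \<Delta>0 \<open>0 \<le> \<eta>\<close> c_nonneg] z_le that by blast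
    have "\<bar>cert_error \<rho> d\<bar> \<le> (\<Sum>t<N. \<eta> * (2 * c t * norm (R t) + (c t)\<^sup>2) * (norm d)\<^sup>2)"
      unfolding cert_error_def Let_def by (rule order_trans[OF sum_abs sum_mono]) (rule term_le, rule refl)
    then show "\<bar>cert_error \<rho> d\<bar> \<le> \<eta> * C * (norm d)\<^sup>2"
      by (simp add: C_def sum_distrib_left sum_distrib_right mult_ac)
  qed
qed

lemma G_remainder_small:
  assumes "\<eta> > 0"
  shows "\<forall>\<^sub>F d in at 0. norm (G (u + d) - G u - DG d) \<le> \<eta> * norm d \<and> norm (G (u + d) - G u) \<le> \<eta>"
proof -
  have "\<forall>\<^sub>F y in at u. norm (G y - G u - DG (y - u)) \<le> \<eta> * norm (y - u)"
    using G_has_derivative[of u] assms unfolding has_derivative_within_alt2 by blast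
  then have "\<forall>\<^sub>F d in at 0. norm (G (u + d) - G u - DG d) \<le> \<eta> * norm d"
    by (simp add: eventually_at_to_0[of _ u] add.commute)
  moreover have "((\<lambda>d. G (u + d)) \<longlongrightarrow> G u) (at 0)"
    using has_derivative_continuous[OF G_has_derivative] by (simp add: isCont_iff)
  then have "\<forall>\<^sub>F d in at 0. dist (G (u + d)) (G u) < \<eta>"
    using assms by (rule tendstoD)
  ultimately show ?thesis
    by eventually_elim (simp add: dist_norm)
qed

lemma certificate_on_level_set:
  assumes "f (u + d) = f u"
  shows "certificate \<rho> (u + d) = - (d \<bullet> ((hess L u + Hterm G u \<Lambda>) *v d)) / 2 - 2 * (\<rho> * crit_penalty d)
    - (L (u + d) - L u - d \<bullet> (hess L u *v d) / 2) - cert_error \<rho> d"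
proof -
  have "\<Lambda> \<bullet> G (u + d) = L u - L (u + d)"
    using assms Lag_at_u by (simp add: Lag_def frob_eq_inner)
  moreover have "\<Lambda> \<bullet> (DG d ** mp_inv (G u) ** DG d) = d \<bullet> (Hterm G u \<Lambda> *v d) / 2"
    by (simp add: Hterm_quadratic)
  moreover have "d \<bullet> ((hess L u + Hterm G u \<Lambda>) *v d) = d \<bullet> (hess L u *v d) + d \<bullet> (Hterm G u \<Lambda> *v d)"
    by (simp add: matrix_vector_mult_add_rdistrib inner_add_right)
  ultimately show ?thesis
    using certificate_expansion[of \<rho> d] by linarith
qed

lemma certificate_negative_near:
  assumes "kernel_cols (G u) E" and "SCC G u \<Lambda>" and "SOSC f G u \<Lambda> E"
  obtains \<rho> where "\<forall>\<^sub>F d in at 0. f (u + d) = f u \<longrightarrow> certificate \<rho> (u + d) < 0"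
proof -
  obtain \<rho>0 c where "c > 0" "\<rho>0 \<ge> 0"
    and growth: "\<And>d. d \<bullet> ((hess L u + Hterm G u \<Lambda>) *v d) + \<rho>0 * crit_penalty d \<ge> c * (norm d)\<^sup>2"
    using sosc_quadratic_growth[OF assms] by blast
  define \<rho> where "\<rho> = \<rho>0 / 4"
  obtain C where "C \<ge> 0" and err: "\<And>\<eta> d. 0 \<le> \<eta> \<Longrightarrow> norm (G (u + d) - G u - DG d) \<le> \<eta> * norm d \<Longrightarrow>
      norm (G (u + d) - G u) \<le> \<eta> \<Longrightarrow> \<bar>cert_error \<rho> d\<bar> \<le> \<eta> * C * (norm d)\<^sup>2"
    using cert_error_bound by blast
  define \<eta> where "\<eta> = c / (8 * (C + 1))"
  have "\<eta> > 0" "\<eta> * C \<le> c / 8"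
    using \<open>c > 0\<close> \<open>C \<ge> 0\<close> by (auto simp: \<eta>_def field_simps)
  have "\<forall>\<^sub>F d in at 0. \<bar>L (u + d) - L u - d \<bullet> grad L u - d \<bullet> (hess L u *v d) / 2\<bar> \<le> c / 8 * (norm d)\<^sup>2"
    using \<open>c > 0\<close> by (intro polyfun_taylor2 Lag_poly) simp
  moreover note G_remainder_small[OF \<open>\<eta> > 0\<close>]
  moreover have "\<forall>\<^sub>F d in at 0. d \<noteq> 0"
    by (simp add: eventually_at_filter)
  ultimately have "\<forall>\<^sub>F d in at 0. f (u + d) = f u \<longrightarrow> certificate \<rho> (u + d) < 0"
  proof eventually_elim
    case (elim d)
    have "- (c / 8 * (norm d)\<^sup>2) \<le> L (u + d) - L u - d \<bullet> (hess L u *v d) / 2"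
      using elim(1) unfolding grad_Lag_eq_zero inner_zero_right abs_le_iff by linarith
    moreover have "\<bar>cert_error \<rho> d\<bar> \<le> c / 8 * (norm d)\<^sup>2"
      using err[of \<eta> d] elim(2) \<open>\<eta> > 0\<close> mult_right_mono[OF \<open>\<eta> * C \<le> c / 8\<close>, of "(norm d)\<^sup>2"] by simp
    moreover have "c * (norm d)\<^sup>2 > 0"
      using elim(3) \<open>c > 0\<close> by simp
    moreover have "d \<bullet> ((hess L u + Hterm G u \<Lambda>) *v d) + 4 * (\<rho> * crit_penalty d) \<ge> c * (norm d)\<^sup>2"
      using growth[of d] by (simp add: \<rho>_def)
    ultimately show ?case
      using certificate_on_level_set[of d \<rho>] unfolding abs_le_iff by linarith
  qed
  then show thesis
    by (rule that)
qed

lemma certificate_isolates_level_set: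
  assumes "kernel_cols (G u) E" and "SCC G u \<Lambda>" and "SOSC f G u \<Lambda> E"
  obtains \<rho> \<delta> where "\<delta> > 0" "\<And>x. x \<in> ball u \<delta> \<Longrightarrow> certificate \<rho> x \<ge> 0 \<Longrightarrow> f x = f u \<Longrightarrow> x = u"
proof -
  obtain \<rho> where "\<forall>\<^sub>F d in at 0. f (u + d) = f u \<longrightarrow> certificate \<rho> (u + d) < 0"
    using certificate_negative_near[OF assms] by blast
  then obtain \<delta> where "\<delta> > 0"
    and negative: "\<And>d. d \<noteq> 0 \<Longrightarrow> norm d < \<delta> \<Longrightarrow> f (u + d) = f u \<Longrightarrow> certificate \<rho> (u + d) < 0"
    by (auto simp: eventually_at dist_norm)
  have "x = u" if "x \<in> ball u \<delta>" "certificate \<rho> x \<ge> 0" "f x = f u" for x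
    using negative[of "x - u"] that by (force simp: dist_norm norm_minus_commute)
  with \<open>\<delta> > 0\<close> show thesis
    using that by blast
qed

end

theorem theorem4p6:
  fixes f :: "real^'n \<Rightarrow> real" and G :: "real^'n \<Rightarrow> real^'m^'m"
    and u :: "real^'n" and \<Lambda> E :: "real^'m^'m"
  assumes "f \<in> polyfun" and "polymat_sym G"
    and "bdd_below (f ` feas G)"
    and "local_minimizer f G u"
    and "kernel_cols (G u) E"
    and "NDC G u E"
    and "KKT f G u \<Lambda>"
    and "SCC G u \<Lambda>"
    and "SOSC f G u \<Lambda> E"
  shows "\<exists>U a. open U \<and> u \<in> U \<and> a \<in> QM G \<and>
           {x. a x \<ge> 0} \<inter> {x. f x = fmin f G} \<inter> U \<subseteq> feas G"
proof -
  have "psd \<Lambda>"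
    using assms(7) by (simp add: KKT_def)
  then obtain N :: nat and R where "\<Lambda> = (\<Sum>t<N. outer_prod (R t))"
    by (rule psd_sum_outer_prod)
  then interpret kkt_point f G u \<Lambda> N R
    using assms by unfold_locales (auto simp: local_minimizer_def feas_def)
  obtain \<rho> \<delta> where "\<delta> > 0"
    and isolated: "\<And>x. x \<in> ball u \<delta> \<Longrightarrow> certificate \<rho> x \<ge> 0 \<Longrightarrow> f x = f u \<Longrightarrow> x = u"
    using certificate_isolates_level_set[OF assms(5,8,9)] by blast
  show ?thesis
  proof (cases "f u = fmin f G")
    case True
    have "u \<in> feas G"
      using assms(4) by (simp add: local_minimizer_def)
    then have "x \<in> feas G" if "x \<in> ball u \<delta>" "certificate \<rho> x \<ge> 0" "f x = fmin f G" for x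
      using isolated[OF that(1,2)] that(3) True by simp
    then have "{x. certificate \<rho> x \<ge> 0} \<inter> {x. f x = fmin f G} \<inter> ball u \<delta> \<subseteq> feas G"
      by blast
    with \<open>\<delta> > 0\<close> show ?thesis
      using certificate_QM by (intro exI[of _ "ball u \<delta>"] exI[of _ "certificate \<rho>"]) auto
  next
    case False
    have "open {x. f x \<noteq> fmin f G}"
      using polyfun_isCont[OF assms(1)] by (simp add: open_Collect_neq continuous_at_imp_continuous_on)
    with False show ?thesis
      using certificate_QM by (intro exI[of _ "{x. f x \<noteq> fmin f G}"] exI[of _ "certificate \<rho>"]) auto
  qed
qed

end
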